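(* Suppose that $\gamma_*>0$ and $P[\mu_1,\mu_2]$ is a nonsingular matrix. Then the two $n\times 2$ matrices $U(\gamma_* )=[u_1(\gamma_* )\ u_2(\gamma_* )]$ and $V(\gamma_* )=[v_1(\gamma_* )\ v_2(\gamma_* )]$ are full rank.
   Context: Let $P(\lambda)=\sum_{j=0}^m A_j\lambda^j$ be an $n\times n$ matrix polynomial with $\det A_m\neq0$, let $\mu_1\neq\mu_2$ be complex numbers, $P[\mu_1,\mu_2]=\frac{P(\mu_1)-P(\mu_2)}{\mu_1-\mu_2}$, and $F[P(\mu_1,\mu_2);\gamma]=\begin{bmatrix} P(\mu_1) & 0\\ \gamma P[\mu_1,\mu_2] & P(\mu_2)\end{bmatrix}$. Let $\gamma_*$ be a point where $s_{2n-1}(F[P(\mu_1,\mu_2);\gamma])$ attains its maximum $s_*>0$ over $\gamma\ge0$. Let $\begin{bmatrix} u_1(\gamma_* )\\ u_2(\gamma_* )\end{bmatrix},\begin{bmatrix} v_1(\gamma_* )\\ v_2(\gamma_* )\end{bmatrix}$ ($u_k,v_k\in\mathbb{C}^n$) be a pair of left and right singular vectors of $s_*$ chosen such that $u_2(\gamma_* )^*P[\mu_1,\mu_2]v_1(\gamma_* )=0$, $u_2(\gamma_* )^*u_1(\gamma_* )=v_2(\gamma_* )^*v_1(\gamma_* )$, and $U(\gamma_* )^*U(\gamma_* )=V(\gamma_* )^*V(\gamma_* )$ (such a pair exists). *)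

theory Defs
  imports "Jordan_Normal_Form.Jordan_Normal_Form" "Jordan_Normal_Form.DL_Rank" "Jordan_Normal_Form.Schur_Decomposition"
    "HOL-Computational_Algebra.Polynomial" "HOL-Library.Multiset"
begin

definition mpoly_eval :: "nat \<Rightarrow> nat \<Rightarrow> (nat \<Rightarrow> complex mat) \<Rightarrow> complex \<Rightarrow> complex mat" where
  "mpoly_eval n m A z = mat n n (\<lambda>(i,k). \<Sum>j\<le>m. z ^ j * (A j $$ (i,k)))"

definition divdiff :: "nat \<Rightarrow> nat \<Rightarrow> (nat \<Rightarrow> complex mat) \<Rightarrow> complex \<Rightarrow> complex \<Rightarrow> complex mat" where
  "divdiff n m A \<mu>1 \<mu>2 = (1 / (\<mu>1 - \<mu>2)) \<cdot>\<^sub>m (mpoly_eval n m A \<mu>1 - mpoly_eval n m A \<mu>2)"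

definition Fmat :: "nat \<Rightarrow> nat \<Rightarrow> (nat \<Rightarrow> complex mat) \<Rightarrow> complex \<Rightarrow> complex \<Rightarrow> real \<Rightarrow> complex mat" where
  "Fmat n m A \<mu>1 \<mu>2 \<gamma> = four_block_mat (mpoly_eval n m A \<mu>1) (0\<^sub>m n n)
      (complex_of_real \<gamma> \<cdot>\<^sub>m divdiff n m A \<mu>1 \<mu>2) (mpoly_eval n m A \<mu>2)"

text \<open>Singular values of a matrix M: square roots of the eigenvalues of M^* M, counted with
  algebraic multiplicity, in nonincreasing order. sing_val k M is the k-th largest (k >= 1).\<close>
definition sing_vals :: "complex mat \<Rightarrow> real list" where
  "sing_vals M = map sqrt (rev (sorted_list_of_multiset
      (image_mset Re (proots (char_poly (mat_adjoint M * M))))))"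

definition sing_val :: "nat \<Rightarrow> complex mat \<Rightarrow> real" where
  "sing_val k M = sing_vals M ! (k - 1)"

end

theory Submission
  imports Defs
begin

text \<open>Split the singular vectors as \<open>u = (a, b)\<close>, \<open>v = (c, d)\<close>, so that \<open>U = [a b]\<close>,
  \<open>V = [c d]\<close>. Because \<open>U\<^sup>* U = V\<^sup>* V\<close>, the matrices \<open>U\<close> and \<open>V\<close> have the same kernel,
  so a kernel vector \<open>(x, y)\<close> satisfies \<open>x a + y b = 0\<close> and \<open>x c + y d = 0\<close> simultaneously.
  Feeding these into the four block equations of \<open>F v = s u\<close>, \<open>F\<^sup>* u = s v\<close> and using
  \<open>P(\<mu>\<^sub>1) - P(\<mu>\<^sub>2) = (\<mu>\<^sub>1 - \<mu>\<^sub>2) P[\<mu>\<^sub>1,\<mu>\<^sub>2]\<close> gives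
  \<open>(x + \<kappa> y) P[\<mu>\<^sub>1,\<mu>\<^sub>2] c = 0\<close> and \<open>(y - conj \<kappa> x) P[\<mu>\<^sub>1,\<mu>\<^sub>2]\<^sup>* b = 0\<close> with
  \<open>\<kappa> = \<gamma>\<^sub>* / (\<mu>\<^sub>1 - \<mu>\<^sub>2)\<close>. Since \<open>P[\<mu>\<^sub>1,\<mu>\<^sub>2]\<close> is nonsingular and \<open>\<gamma>\<^sub>*, s\<^sub>* \<noteq> 0\<close>,
  neither \<open>b\<close> nor \<open>c\<close> vanishes, hence \<open>x = -\<kappa> y\<close> and \<open>y = conj \<kappa> x\<close>, i.e.
  \<open>(1 + |\<kappa>|\<^sup>2) y = 0\<close> and \<open>x = y = 0\<close>. So both kernels are trivial, which also forces \<open>n \<ge> 2\<close>.\<close>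

lemma conjugate_diff: "conjugate (a - b) = conjugate a - (conjugate b :: 'a :: conjugatable_ring)"
  by (metis conjugate_dist_add conjugate_neg diff_conv_add_uminus)

lemma smult_zero_vec [simp]: "x \<cdot>\<^sub>v 0\<^sub>v n = (0\<^sub>v n :: 'a :: mult_zero vec)"
  by (intro eq_vecI) simp_all

lemma smult_vec_eq_0_iff:
  fixes v :: "'a :: idom vec"
  assumes "v \<in> carrier_vec n"
  shows "x \<cdot>\<^sub>v v = 0\<^sub>v n \<longleftrightarrow> x = 0 \<or> v = 0\<^sub>v n"
proof
  assume eq: "x \<cdot>\<^sub>v v = 0\<^sub>v n"
  show "x = 0 \<or> v = 0\<^sub>v n"
  proof (cases "x = 0")
    case False
    have "v = 0\<^sub>v n"
    proof (rule eq_vecI)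
      fix i assume i: "i < dim_vec (0\<^sub>v n :: 'a vec)"
      with assms eq have "x * v $ i = 0" by (metis index_smult_vec(1) index_zero_vec carrier_vecD)
      with False i show "v $ i = 0\<^sub>v n $ i" by simp
    qed (use assms in simp)
    thus ?thesis ..
  qed simp
qed (use assms in auto)

lemma smult_append_vec:
  "v \<in> carrier_vec n \<Longrightarrow> w \<in> carrier_vec m \<Longrightarrow> x \<cdot>\<^sub>v (v @\<^sub>v w) = (x \<cdot>\<^sub>v v) @\<^sub>v (x \<cdot>\<^sub>v w)"
  by (intro eq_vecI) (auto simp: index_append_vec)

lemma smult_mat_mult_vec:
  "A \<in> carrier_mat nr nc \<Longrightarrow> v \<in> carrier_vec nc \<Longrightarrow> (k \<cdot>\<^sub>m A) *\<^sub>v v = k \<cdot>\<^sub>v (A *\<^sub>v v)"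
  by (intro eq_vecI) (auto simp: scalar_prod_def sum_distrib_left algebra_simps)

lemma mult_mat_zero_vec: "A \<in> carrier_mat nr nc \<Longrightarrow> A *\<^sub>v 0\<^sub>v nc = 0\<^sub>v nr"
  by (intro eq_vecI) (auto simp: scalar_prod_def)

lemma zero_mat_mult_vec: "v \<in> carrier_vec nc \<Longrightarrow> 0\<^sub>m nr nc *\<^sub>v v = 0\<^sub>v nr"
  by (intro eq_vecI) (auto simp: scalar_prod_def)

lemma four_block_mat_mult_append_vec_eq:
  assumes A: "A \<in> carrier_mat nr1 nc1" and B: "B \<in> carrier_mat nr1 nc2"
    and C: "C \<in> carrier_mat nr2 nc1" and D: "D \<in> carrier_mat nr2 nc2"
    and x: "x \<in> carrier_vec nc1" and y: "y \<in> carrier_vec nc2" and p: "p \<in> carrier_vec nr1"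
    and eq: "four_block_mat A B C D *\<^sub>v (x @\<^sub>v y) = p @\<^sub>v q"
  shows "A *\<^sub>v x + B *\<^sub>v y = p" and "C *\<^sub>v x + D *\<^sub>v y = q"
proof -
  have "A *\<^sub>v x + B *\<^sub>v y \<in> carrier_vec nr1" using A B x y by simp
  from append_vec_eq[OF this p] eq show "A *\<^sub>v x + B *\<^sub>v y = p" and "C *\<^sub>v x + D *\<^sub>v y = q"
    unfolding four_block_mat_mult_vec[OF A B C D x y] by simp_all
qed

lemma mat_of_cols_two_mult_vec:
  fixes a b :: "'a :: comm_semiring_0 vec"
  assumes "a \<in> carrier_vec n" "b \<in> carrier_vec n" "w \<in> carrier_vec 2"
  shows "mat_of_cols n [a, b] *\<^sub>v w = w $ 0 \<cdot>\<^sub>v a + w $ 1 \<cdot>\<^sub>v b"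
  using assms by (intro eq_vecI) (auto simp: scalar_prod_def numeral_2_eq_2 row_def mat_of_cols_index algebra_simps)

lemma dim_row_mat_adjoint [simp]: "dim_row (mat_adjoint A) = dim_col A"
  and dim_col_mat_adjoint [simp]: "dim_col (mat_adjoint A) = dim_row A"
  unfolding mat_adjoint_def by auto

lemma index_mat_adjoint [simp]:
  "i < dim_col A \<Longrightarrow> j < dim_row A \<Longrightarrow> mat_adjoint A $$ (i, j) = conjugate (A $$ (j, i))"
  unfolding mat_adjoint_def by (auto simp: mat_of_rows_def)

lemma mat_adjoint_carrier [simp]: "A \<in> carrier_mat nr nc \<Longrightarrow> mat_adjoint A \<in> carrier_mat nc nr"
  by (auto intro: carrier_matI)

lemma mat_adjoint_zero_mat: "mat_adjoint (0\<^sub>m nr nc) = (0\<^sub>m nc nr :: 'a :: conjugatable_field mat)"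
  by (intro eq_matI) auto

lemma mat_adjoint_smult_mat: "mat_adjoint (k \<cdot>\<^sub>m A) = conjugate k \<cdot>\<^sub>m mat_adjoint A"
  by (intro eq_matI) (auto simp: conjugate_dist_mul)

lemma mat_adjoint_minus_mat:
  "A \<in> carrier_mat nr nc \<Longrightarrow> B \<in> carrier_mat nr nc \<Longrightarrow> mat_adjoint (A - B) = mat_adjoint A - mat_adjoint B"
  by (intro eq_matI) (auto simp: conjugate_diff)

lemma mat_adjoint_four_block_mat:
  assumes "A \<in> carrier_mat nr1 nc1" "B \<in> carrier_mat nr1 nc2"
    and "C \<in> carrier_mat nr2 nc1" "D \<in> carrier_mat nr2 nc2"
  shows "mat_adjoint (four_block_mat A B C D)
       = four_block_mat (mat_adjoint A) (mat_adjoint C) (mat_adjoint B) (mat_adjoint D)"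
  using assms by (intro eq_matI) (auto simp: index_mat_four_block)

lemma mat_adjoint_mult_vec:
  fixes A :: "'a :: conjugatable_field mat"
  assumes "A \<in> carrier_mat nr nc" "x \<in> carrier_vec nr"
  shows "mat_adjoint A *\<^sub>v x = conjugate (transpose_mat A *\<^sub>v conjugate x)"
  using assms by (intro eq_vecI) (auto simp: scalar_prod_def sum_conjugate conjugate_dist_mul mult.commute)

lemma cscalar_prod_mat_adjoint:
  fixes A :: "complex mat"
  assumes A: "A \<in> carrier_mat nr nc" and x: "x \<in> carrier_vec nc" and y: "y \<in> carrier_vec nr"
  shows "(A *\<^sub>v x) \<bullet>c y = x \<bullet>c (mat_adjoint A *\<^sub>v y)"
proof -
  have "(A *\<^sub>v x) \<bullet>c y = (\<Sum>i<nr. \<Sum>j<nc. A $$ (i, j) * x $ j * cnj (y $ i))"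
    using A x y by (simp add: scalar_prod_def lessThan_atLeast0 sum_distrib_right)
  also have "\<dots> = (\<Sum>j<nc. \<Sum>i<nr. x $ j * cnj (cnj (A $$ (i, j)) * y $ i))"
    by (subst sum.swap) (simp add: mult.commute mult.left_commute)
  also have "\<dots> = x \<bullet>c (mat_adjoint A *\<^sub>v y)"
    using A x y by (simp add: scalar_prod_def lessThan_atLeast0 sum_distrib_left)
  finally show ?thesis .
qed

lemma same_gram_mult_vec_eq_0_iff:
  fixes U V :: "complex mat"
  assumes U: "U \<in> carrier_mat nr nc" and V: "V \<in> carrier_mat nr' nc" and w: "w \<in> carrier_vec nc"
    and gram: "mat_adjoint U * U = mat_adjoint V * V"
  shows "U *\<^sub>v w = 0\<^sub>v nr \<longleftrightarrow> V *\<^sub>v w = 0\<^sub>v nr'"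
proof -
  have square_norm: "(M *\<^sub>v w) \<bullet>c (M *\<^sub>v w) = w \<bullet>c ((mat_adjoint M * M) *\<^sub>v w)"
    if M: "M \<in> carrier_mat k nc" for M :: "complex mat" and k
    unfolding assoc_mult_mat_vec[OF mat_adjoint_carrier[OF M] M w]
    by (rule cscalar_prod_mat_adjoint[OF M w mult_mat_vec_carrier[OF M w]])
  have "U *\<^sub>v w = 0\<^sub>v nr \<longleftrightarrow> (U *\<^sub>v w) \<bullet>c (U *\<^sub>v w) = 0"
    using conjugate_square_eq_0_vec[OF mult_mat_vec_carrier[OF U w]] by simp
  also have "\<dots> \<longleftrightarrow> (V *\<^sub>v w) \<bullet>c (V *\<^sub>v w) = 0"
    unfolding square_norm[OF U] square_norm[OF V] gram ..
  also have "\<dots> \<longleftrightarrow> V *\<^sub>v w = 0\<^sub>v nr'"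
    using conjugate_square_eq_0_vec[OF mult_mat_vec_carrier[OF V w]] by simp
  finally show ?thesis .
qed

lemma det_nonzero_kernel_trivial:
  fixes A :: "'a :: idom mat"
  assumes "A \<in> carrier_mat n n" "det A \<noteq> 0" "x \<in> carrier_vec n" "A *\<^sub>v x = 0\<^sub>v n"
  shows "x = 0\<^sub>v n"
proof (rule ccontr)
  assume "x \<noteq> 0\<^sub>v n"
  with assms(3,4) have "det A = 0" unfolding det_0_iff_vec_prod_zero[OF assms(1)] by blast
  with assms(2) show False ..
qed

lemma det_nonzero_adjoint_kernel_trivial:
  fixes A :: "complex mat"
  assumes A: "A \<in> carrier_mat n n" and det: "det A \<noteq> 0" and x: "x \<in> carrier_vec n"
    and ker: "mat_adjoint A *\<^sub>v x = 0\<^sub>v n"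
  shows "x = 0\<^sub>v n"
proof -
  have "transpose_mat A *\<^sub>v conjugate x = 0\<^sub>v n"
    using ker unfolding mat_adjoint_mult_vec[OF A x] conjugate_zero_iff_vec .
  from det_nonzero_kernel_trivial[OF _ _ _ this] have "conjugate x = 0\<^sub>v n"
    using A det x det_transpose[OF A] by simp
  thus ?thesis by simp
qed

lemma (in vec_space) trivial_kernel_imp_full_column_rank:
  assumes A: "A \<in> carrier_mat n nc"
    and ker: "\<And>w. w \<in> carrier_vec nc \<Longrightarrow> A *\<^sub>v w = 0\<^sub>v n \<Longrightarrow> w = 0\<^sub>v nc"
  shows "rank A = nc" and "nc \<le> n"
proof -
  have mult_unit: "A *\<^sub>v unit_vec nc i = col A i" if "i < nc" for i
    using A that by (intro eq_vecI) auto
  have "col A i \<noteq> col A j" if ij: "i < nc" "j < nc" "i \<noteq> j" for i j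
  proof
    assume "col A i = col A j"
    hence "A *\<^sub>v (unit_vec nc i - unit_vec nc j) = 0\<^sub>v n"
      using A ij by (simp add: mult_minus_distrib_mat_vec[OF A] mult_unit)
    from ker[OF _ this] have "unit_vec nc i - unit_vec nc j = (0\<^sub>v nc :: 'a vec)" by simp
    from arg_cong[OF this, of "\<lambda>v. v $ i"] ij show False by simp
  qed
  hence distinct: "distinct (cols A)"
    using A by (auto simp: distinct_conv_nth)
  have indpt: "lin_indpt (set (cols A))"
  proof
    assume "lin_dep (set (cols A))"
    then obtain w where "w \<in> carrier_vec nc" "w \<noteq> 0\<^sub>v nc" "A *\<^sub>v w = 0\<^sub>v n"
      by (rule lin_depE[OF A _ distinct])
    with ker show False by blast
  qed
  show "rank A = nc" by (rule lin_indpt_full_rank[OF A distinct indpt])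
  have "set (cols A) \<subseteq> carrier_vec n" using A cols_dim by blast
  with indpt have "card (set (cols A)) \<le> dim" by (intro li_le_dim(2)) simp_all
  thus "nc \<le> n" using A distinct_card[OF distinct] by (simp add: dim_is_n)
qed

text \<open>\<open>(a, b)\<close> and \<open>(c, d)\<close> are the halves of a left and a right singular vector, for the
  singular value \<open>s\<close>, of the block matrix \<open>[[P1, 0], [g D, P2]]\<close> with \<open>D = k (P1 - P2)\<close>.\<close>

locale block_singular_pair =
  fixes n :: nat and P1 P2 D :: "complex mat" and k g s :: complex and a b c d :: "complex vec"
  assumes P1 [simp]: "P1 \<in> carrier_mat n n" and P2 [simp]: "P2 \<in> carrier_mat n n"
    and a [simp]: "a \<in> carrier_vec n" and b [simp]: "b \<in> carrier_vec n"
    and c [simp]: "c \<in> carrier_vec n" and d [simp]: "d \<in> carrier_vec n"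
    and D_eq: "D = k \<cdot>\<^sub>m (P1 - P2)" and det_D: "det D \<noteq> 0"
    and g_nonzero: "g \<noteq> 0" and s_nonzero: "s \<noteq> 0"
    and right_first: "P1 *\<^sub>v c = s \<cdot>\<^sub>v a"
    and right_second: "g \<cdot>\<^sub>v (D *\<^sub>v c) + P2 *\<^sub>v d = s \<cdot>\<^sub>v b"
    and left_first: "mat_adjoint P1 *\<^sub>v a + cnj g \<cdot>\<^sub>v (mat_adjoint D *\<^sub>v b) = s \<cdot>\<^sub>v c"
    and left_second: "mat_adjoint P2 *\<^sub>v b = s \<cdot>\<^sub>v d"
    and nonzero: "a \<noteq> 0\<^sub>v n \<or> b \<noteq> 0\<^sub>v n"
begin

lemma D [simp]: "D \<in> carrier_mat n n"
  unfolding D_eq by (simp add: minus_carrier_mat)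

lemma dims [simp]:
  "dim_row D = n" "dim_col D = n" "dim_row P1 = n" "dim_col P1 = n" "dim_row P2 = n" "dim_col P2 = n"
  "dim_vec a = n" "dim_vec b = n" "dim_vec c = n" "dim_vec d = n"
  using carrier_matD[OF D] carrier_matD[OF P1] carrier_matD[OF P2] carrier_vecD[OF a] carrier_vecD[OF b]
    carrier_vecD[OF c] carrier_vecD[OF d] by simp_all

lemma mult_vec_carrier [simp]:
  assumes "v \<in> carrier_vec n"
  shows "P1 *\<^sub>v v \<in> carrier_vec n" "P2 *\<^sub>v v \<in> carrier_vec n" "D *\<^sub>v v \<in> carrier_vec n"
    and "mat_adjoint P1 *\<^sub>v v \<in> carrier_vec n" "mat_adjoint P2 *\<^sub>v v \<in> carrier_vec n"
    and "mat_adjoint D *\<^sub>v v \<in> carrier_vec n"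
  using assms by (simp_all add: mult_mat_vec_carrier[of _ n n])

lemma D_mult_vec: "v \<in> carrier_vec n \<Longrightarrow> D *\<^sub>v v = k \<cdot>\<^sub>v (P1 *\<^sub>v v - P2 *\<^sub>v v)"
  unfolding D_eq by (simp add: minus_carrier_mat smult_mat_mult_vec[of _ n n] minus_mult_distrib_mat_vec[of _ n n])

lemma adjoint_D_mult_vec:
  "v \<in> carrier_vec n \<Longrightarrow> mat_adjoint D *\<^sub>v v = cnj k \<cdot>\<^sub>v (mat_adjoint P1 *\<^sub>v v - mat_adjoint P2 *\<^sub>v v)"
  unfolding D_eq mat_adjoint_smult_mat mat_adjoint_minus_mat[OF P1 P2]
  by (simp add: minus_carrier_mat smult_mat_mult_vec[of _ n n] minus_mult_distrib_mat_vec[of _ n n])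

lemma c_nonzero: "c \<noteq> 0\<^sub>v n"
proof
  assume c0: "c = 0\<^sub>v n"
  have "s \<cdot>\<^sub>v a = 0\<^sub>v n" using right_first unfolding c0 mult_mat_zero_vec[OF P1] by simp
  hence a0: "a = 0\<^sub>v n" using s_nonzero smult_vec_eq_0_iff[OF a] by simp
  have "cnj g \<cdot>\<^sub>v (mat_adjoint D *\<^sub>v b) = 0\<^sub>v n"
    using left_first unfolding a0 c0 mult_mat_zero_vec[OF mat_adjoint_carrier[OF P1]] by simp
  hence "mat_adjoint D *\<^sub>v b = 0\<^sub>v n" using g_nonzero smult_vec_eq_0_iff[OF mult_vec_carrier(6)[OF b]] by simp
  hence "b = 0\<^sub>v n" by (rule det_nonzero_adjoint_kernel_trivial[OF D det_D b])
  with a0 nonzero show False by simp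
qed

lemma b_nonzero: "b \<noteq> 0\<^sub>v n"
proof
  assume b0: "b = 0\<^sub>v n"
  have "s \<cdot>\<^sub>v d = 0\<^sub>v n"
    using left_second unfolding b0 mult_mat_zero_vec[OF mat_adjoint_carrier[OF P2]] by simp
  hence d0: "d = 0\<^sub>v n" using s_nonzero smult_vec_eq_0_iff[OF d] by simp
  have "g \<cdot>\<^sub>v (D *\<^sub>v c) = 0\<^sub>v n"
    using right_second unfolding b0 d0 mult_mat_zero_vec[OF P2] by simp
  hence "D *\<^sub>v c = 0\<^sub>v n" using g_nonzero smult_vec_eq_0_iff[OF mult_vec_carrier(3)[OF c]] by simp
  hence "c = 0\<^sub>v n" by (rule det_nonzero_kernel_trivial[OF D det_D c])
  with c_nonzero show False ..
qed

lemma right_dependence_coefficient: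
  assumes dep_u: "x \<cdot>\<^sub>v a + y \<cdot>\<^sub>v b = 0\<^sub>v n" and dep_v: "x \<cdot>\<^sub>v c + y \<cdot>\<^sub>v d = 0\<^sub>v n"
  shows "x = - (k * g) * y"
proof -
  have dep_P2: "x \<cdot>\<^sub>v (P2 *\<^sub>v c) + y \<cdot>\<^sub>v (P2 *\<^sub>v d) = 0\<^sub>v n"
    using arg_cong[OF dep_v, of "\<lambda>v. P2 *\<^sub>v v"]
    by (simp add: mult_add_distrib_mat_vec[OF P2] mult_mat_vec[OF P2] mult_mat_zero_vec[OF P2])
  have "(x + k * g * y) \<cdot>\<^sub>v (D *\<^sub>v c) = 0\<^sub>v n"
  proof (rule eq_vecI)
    fix i assume "i < dim_vec (0\<^sub>v n :: complex vec)"
    hence i: "i < n" by simp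
    let ?Dc = "(D *\<^sub>v c) $ i" and ?P1c = "(P1 *\<^sub>v c) $ i"
      and ?P2c = "(P2 *\<^sub>v c) $ i" and ?P2d = "(P2 *\<^sub>v d) $ i"
    have "?Dc = k * (?P1c - ?P2c)" using D_mult_vec[OF c] i by simp
    moreover have "?P1c = s * a $ i" using arg_cong[OF right_first, of "\<lambda>v. v $ i"] i by simp
    moreover have "g * ?Dc + ?P2d = s * b $ i" using arg_cong[OF right_second, of "\<lambda>v. v $ i"] i by simp
    moreover have "x * a $ i + y * b $ i = 0" using arg_cong[OF dep_u, of "\<lambda>v. v $ i"] i by simp
    moreover have "x * ?P2c + y * ?P2d = 0" using arg_cong[OF dep_P2, of "\<lambda>v. v $ i"] i by simp
    txt \<open>Each bracket vanishes by one of the five facts above.\<close>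
    moreover have "(x + k * g * y) * ?Dc = x * (?Dc - k * (?P1c - ?P2c)) + k * x * (?P1c - s * a $ i)
        + k * y * (g * ?Dc + ?P2d - s * b $ i)
        + k * (s * (x * a $ i + y * b $ i) - (x * ?P2c + y * ?P2d))"
      by (simp add: algebra_simps)
    ultimately show "((x + k * g * y) \<cdot>\<^sub>v (D *\<^sub>v c)) $ i = 0\<^sub>v n $ i" using i by simp
  qed simp
  moreover have "D *\<^sub>v c \<noteq> 0\<^sub>v n" using c_nonzero det_nonzero_kernel_trivial[OF D det_D c] by blast
  ultimately have "x + k * g * y = 0" by (simp add: smult_vec_eq_0_iff[of _ n])
  thus ?thesis by (simp add: algebra_simps add_eq_0_iff2)
qed

lemma left_dependence_coefficient:
  assumes dep_u: "x \<cdot>\<^sub>v a + y \<cdot>\<^sub>v b = 0\<^sub>v n" and dep_v: "x \<cdot>\<^sub>v c + y \<cdot>\<^sub>v d = 0\<^sub>v n"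
  shows "y = cnj (k * g) * x"
proof -
  have dep_P1: "x \<cdot>\<^sub>v (mat_adjoint P1 *\<^sub>v a) + y \<cdot>\<^sub>v (mat_adjoint P1 *\<^sub>v b) = 0\<^sub>v n"
    using arg_cong[OF dep_u, of "\<lambda>v. mat_adjoint P1 *\<^sub>v v"] mat_adjoint_carrier[OF P1]
    by (simp add: mult_add_distrib_mat_vec[of _ n n] mult_mat_vec[of _ n n] mult_mat_zero_vec[of _ n n])
  have "(y - cnj k * cnj g * x) \<cdot>\<^sub>v (mat_adjoint D *\<^sub>v b) = 0\<^sub>v n"
  proof (rule eq_vecI)
    fix i assume "i < dim_vec (0\<^sub>v n :: complex vec)"
    hence i: "i < n" by simp
    let ?Db = "(mat_adjoint D *\<^sub>v b) $ i" and ?P1a = "(mat_adjoint P1 *\<^sub>v a) $ i"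
      and ?P1b = "(mat_adjoint P1 *\<^sub>v b) $ i" and ?P2b = "(mat_adjoint P2 *\<^sub>v b) $ i"
    have "?Db = cnj k * (?P1b - ?P2b)" using adjoint_D_mult_vec[OF b] i by simp
    moreover have "?P1a + cnj g * ?Db = s * c $ i" using arg_cong[OF left_first, of "\<lambda>v. v $ i"] i by simp
    moreover have "?P2b = s * d $ i" using arg_cong[OF left_second, of "\<lambda>v. v $ i"] i by simp
    moreover have "x * c $ i + y * d $ i = 0" using arg_cong[OF dep_v, of "\<lambda>v. v $ i"] i by simp
    moreover have "x * ?P1a + y * ?P1b = 0" using arg_cong[OF dep_P1, of "\<lambda>v. v $ i"] i by simp
    moreover have "(y - cnj k * cnj g * x) * ?Db = y * (?Db - cnj k * (?P1b - ?P2b))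
        + cnj k * ((x * ?P1a + y * ?P1b) - x * (?P1a + cnj g * ?Db - s * c $ i)
          - y * (?P2b - s * d $ i) - s * (x * c $ i + y * d $ i))"
      by (simp add: algebra_simps)
    ultimately show "((y - cnj k * cnj g * x) \<cdot>\<^sub>v (mat_adjoint D *\<^sub>v b)) $ i = 0\<^sub>v n $ i"
      using i by simp
  qed simp
  moreover have "mat_adjoint D *\<^sub>v b \<noteq> 0\<^sub>v n"
    using b_nonzero det_nonzero_adjoint_kernel_trivial[OF D det_D b] by blast
  ultimately have "y - cnj k * cnj g * x = 0" by (simp add: smult_vec_eq_0_iff[of _ n])
  thus ?thesis by simp
qed

lemma no_common_dependence:
  assumes "x \<cdot>\<^sub>v a + y \<cdot>\<^sub>v b = 0\<^sub>v n" and "x \<cdot>\<^sub>v c + y \<cdot>\<^sub>v d = 0\<^sub>v n"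
  shows "x = 0 \<and> y = 0"
proof -
  define z where "z = k * g"
  have x: "x = - z * y" and y: "y = cnj z * x"
    unfolding z_def using right_dependence_coefficient[OF assms] left_dependence_coefficient[OF assms] .
  have "(1 + z * cnj z) * y = y - cnj z * x" unfolding x by (simp add: algebra_simps)
  hence "(1 + z * cnj z) * y = 0" using y by simp
  moreover have "1 + z * cnj z = complex_of_real (1 + (cmod z)\<^sup>2)"
    by (simp only: of_real_add of_real_1 complex_norm_square)
  moreover have "1 + (cmod z)\<^sup>2 > 0" by (simp add: add_pos_nonneg)
  ultimately have "y = 0" by (metis mult_eq_0_iff of_real_eq_0_iff less_irrefl)
  with x show ?thesis by simp
qed

lemma columns_full_rank:
  assumes gram: "mat_adjoint (mat_of_cols n [a, b]) * mat_of_cols n [a, b]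
               = mat_adjoint (mat_of_cols n [c, d]) * mat_of_cols n [c, d]"
  shows "vec_space.rank n (mat_of_cols n [a, b]) = min n 2"
    and "vec_space.rank n (mat_of_cols n [c, d]) = min n 2"
proof -
  let ?U = "mat_of_cols n [a, b]" and ?V = "mat_of_cols n [c, d]"
  have U: "?U \<in> carrier_mat n 2" and V: "?V \<in> carrier_mat n 2" by auto
  have kernel: "w = 0\<^sub>v 2" if w: "w \<in> carrier_vec 2" and "?U *\<^sub>v w = 0\<^sub>v n \<or> ?V *\<^sub>v w = 0\<^sub>v n" for w
  proof -
    have "?U *\<^sub>v w = 0\<^sub>v n" and "?V *\<^sub>v w = 0\<^sub>v n"
      using that same_gram_mult_vec_eq_0_iff[OF U V w gram] by auto
    hence "w $ 0 = 0 \<and> w $ 1 = 0"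
      by (intro no_common_dependence) (simp_all add: mat_of_cols_two_mult_vec w)
    with w show ?thesis by (intro eq_vecI) (auto simp: less_2_cases_iff)
  qed
  have "vec_space.rank n ?U = 2" "2 \<le> n"
    using vec_space.trivial_kernel_imp_full_column_rank[OF U] kernel by blast+
  moreover have "vec_space.rank n ?V = 2"
    using vec_space.trivial_kernel_imp_full_column_rank(1)[OF V] kernel by blast
  ultimately show "vec_space.rank n ?U = min n 2" and "vec_space.rank n ?V = min n 2" by simp_all
qed

end

lemma block_singular_pair_Fmat:
  fixes A :: "nat \<Rightarrow> complex mat" and \<gamma> \<sigma> :: real and u v :: "complex vec"
  assumes \<gamma>: "\<gamma> > 0" and \<sigma>: "\<sigma> > 0" and det: "det (divdiff n m A \<mu>1 \<mu>2) \<noteq> 0"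
    and u: "u \<in> carrier_vec (2 * n)" and v: "v \<in> carrier_vec (2 * n)" and u_nonzero: "u \<noteq> 0\<^sub>v (2 * n)"
    and right: "Fmat n m A \<mu>1 \<mu>2 \<gamma> *\<^sub>v v = complex_of_real \<sigma> \<cdot>\<^sub>v u"
    and left: "mat_adjoint (Fmat n m A \<mu>1 \<mu>2 \<gamma>) *\<^sub>v u = complex_of_real \<sigma> \<cdot>\<^sub>v v"
  shows "block_singular_pair n (mpoly_eval n m A \<mu>1) (mpoly_eval n m A \<mu>2) (divdiff n m A \<mu>1 \<mu>2)
           (1 / (\<mu>1 - \<mu>2)) \<gamma> \<sigma> (vec_first u n) (vec_last u n) (vec_first v n) (vec_last v n)"
proof -
  define P1 P2 D where "P1 = mpoly_eval n m A \<mu>1" and "P2 = mpoly_eval n m A \<mu>2"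
    and "D = divdiff n m A \<mu>1 \<mu>2"
  define a b c d where "a = vec_first u n" and "b = vec_last u n"
    and "c = vec_first v n" and "d = vec_last v n"
  have P1: "P1 \<in> carrier_mat n n" and P2: "P2 \<in> carrier_mat n n"
    unfolding P1_def P2_def mpoly_eval_def by auto
  have D_eq: "D = (1 / (\<mu>1 - \<mu>2)) \<cdot>\<^sub>m (P1 - P2)" unfolding D_def P1_def P2_def divdiff_def ..
  have D: "D \<in> carrier_mat n n" unfolding D_eq using P2 by (simp add: minus_carrier_mat)
  have gD: "complex_of_real \<gamma> \<cdot>\<^sub>m D \<in> carrier_mat n n" using D by simp
  have Z: "0\<^sub>m n n \<in> carrier_mat n n" by simp
  have F: "Fmat n m A \<mu>1 \<mu>2 \<gamma> = four_block_mat P1 (0\<^sub>m n n) (complex_of_real \<gamma> \<cdot>\<^sub>m D) P2"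
    unfolding Fmat_def P1_def P2_def D_def ..
  have a: "a \<in> carrier_vec n" and b: "b \<in> carrier_vec n" and c: "c \<in> carrier_vec n" and d: "d \<in> carrier_vec n"
    unfolding a_def b_def c_def d_def by simp_all
  have uab: "u = a @\<^sub>v b" and vcd: "v = c @\<^sub>v d"
    unfolding a_def b_def c_def d_def using u v by (simp_all add: mult_2)
  have "four_block_mat P1 (0\<^sub>m n n) (complex_of_real \<gamma> \<cdot>\<^sub>m D) P2 *\<^sub>v (c @\<^sub>v d)
      = (complex_of_real \<sigma> \<cdot>\<^sub>v a) @\<^sub>v (complex_of_real \<sigma> \<cdot>\<^sub>v b)"
    using right unfolding F uab vcd smult_append_vec[OF a b] .
  from four_block_mat_mult_append_vec_eq[OF P1 Z gD P2 c d _ this]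
  have right1: "P1 *\<^sub>v c = complex_of_real \<sigma> \<cdot>\<^sub>v a"
    and right2: "complex_of_real \<gamma> \<cdot>\<^sub>v (D *\<^sub>v c) + P2 *\<^sub>v d = complex_of_real \<sigma> \<cdot>\<^sub>v b"
    using P1 D a c d by (simp_all add: smult_mat_mult_vec[of _ n n] zero_mat_mult_vec)
  have adj_P1: "mat_adjoint P1 \<in> carrier_mat n n" and adj_P2: "mat_adjoint P2 \<in> carrier_mat n n"
    and adj_gD: "mat_adjoint (complex_of_real \<gamma> \<cdot>\<^sub>m D) \<in> carrier_mat n n"
    and adj_Z: "mat_adjoint (0\<^sub>m n n :: complex mat) \<in> carrier_mat n n"
    using P1 P2 gD by simp_all
  have "four_block_mat (mat_adjoint P1) (mat_adjoint (complex_of_real \<gamma> \<cdot>\<^sub>m D)) (mat_adjoint (0\<^sub>m n n))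
        (mat_adjoint P2) *\<^sub>v (a @\<^sub>v b) = (complex_of_real \<sigma> \<cdot>\<^sub>v c) @\<^sub>v (complex_of_real \<sigma> \<cdot>\<^sub>v d)"
    using left unfolding F uab vcd smult_append_vec[OF c d] mat_adjoint_four_block_mat[OF P1 Z gD P2] .
  from four_block_mat_mult_append_vec_eq[OF adj_P1 adj_gD adj_Z adj_P2 a b _ this]
  have left1: "mat_adjoint P1 *\<^sub>v a + cnj \<gamma> \<cdot>\<^sub>v (mat_adjoint D *\<^sub>v b) = complex_of_real \<sigma> \<cdot>\<^sub>v c"
    and left2: "mat_adjoint P2 *\<^sub>v b = complex_of_real \<sigma> \<cdot>\<^sub>v d"
    using D a b c mult_mat_vec_carrier[OF adj_P2 b]
    by (simp_all add: mat_adjoint_smult_mat mat_adjoint_zero_mat smult_mat_mult_vec[of _ n n] zero_mat_mult_vec)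
  have "a \<noteq> 0\<^sub>v n \<or> b \<noteq> 0\<^sub>v n"
  proof (rule ccontr)
    assume "\<not> ?thesis"
    hence "u = 0\<^sub>v n @\<^sub>v 0\<^sub>v n" unfolding uab by simp
    also have "\<dots> = 0\<^sub>v (2 * n)" by (intro eq_vecI) auto
    finally show False using u_nonzero by contradiction
  qed
  with P1 P2 a b c d D_eq det \<gamma> \<sigma> right1 right2 left1 left2 show ?thesis
    unfolding P1_def P2_def D_def a_def b_def c_def d_def by unfold_locales auto
qed

theorem lemma5:
  fixes n m :: nat and A :: "nat \<Rightarrow> complex mat" and \<mu>1 \<mu>2 :: complex
    and \<gamma>s ss :: real and u v :: "complex vec"
  assumes A_dim: "\<And>j. j \<le> m \<Longrightarrow> A j \<in> carrier_mat n n"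
    and detAm: "det (A m) \<noteq> 0"
    and mu_ne: "\<mu>1 \<noteq> \<mu>2"
    and gamma_nonneg: "\<gamma>s \<ge> 0"
    and gamma_max: "\<And>\<gamma>. \<gamma> \<ge> 0 \<Longrightarrow>
         sing_val (2*n - 1) (Fmat n m A \<mu>1 \<mu>2 \<gamma>) \<le> sing_val (2*n - 1) (Fmat n m A \<mu>1 \<mu>2 \<gamma>s)"
    and ss_def: "ss = sing_val (2*n - 1) (Fmat n m A \<mu>1 \<mu>2 \<gamma>s)"
    and ss_pos: "ss > 0"
    and u_dim: "u \<in> carrier_vec (2*n)" and v_dim: "v \<in> carrier_vec (2*n)"
    and u_unit: "u \<bullet>c u = 1" and v_unit: "v \<bullet>c v = 1"
    and right_sv: "Fmat n m A \<mu>1 \<mu>2 \<gamma>s *\<^sub>v v = complex_of_real ss \<cdot>\<^sub>v u"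
    and left_sv: "mat_adjoint (Fmat n m A \<mu>1 \<mu>2 \<gamma>s) *\<^sub>v u = complex_of_real ss \<cdot>\<^sub>v v"
    and orth: "(divdiff n m A \<mu>1 \<mu>2 *\<^sub>v vec_first v n) \<bullet>c vec_last u n = 0"
    and cross: "vec_first u n \<bullet>c vec_last u n = vec_first v n \<bullet>c vec_last v n"
    and gram: "mat_adjoint (mat_of_cols n [vec_first u n, vec_last u n]) * mat_of_cols n [vec_first u n, vec_last u n]
             = mat_adjoint (mat_of_cols n [vec_first v n, vec_last v n]) * mat_of_cols n [vec_first v n, vec_last v n]"
    and gamma_pos: "\<gamma>s > 0"
    and nonsing: "det (divdiff n m A \<mu>1 \<mu>2) \<noteq> 0"
  shows "vec_space.rank n (mat_of_cols n [vec_first u n, vec_last u n]) = min n 2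
       \<and> vec_space.rank n (mat_of_cols n [vec_first v n, vec_last v n]) = min n 2"
proof -
  have "u \<noteq> 0\<^sub>v (2 * n)" using u_unit by auto
  then interpret block_singular_pair n "mpoly_eval n m A \<mu>1" "mpoly_eval n m A \<mu>2" "divdiff n m A \<mu>1 \<mu>2"
      "1 / (\<mu>1 - \<mu>2)" \<gamma>s ss "vec_first u n" "vec_last u n" "vec_first v n" "vec_last v n"
    by (rule block_singular_pair_Fmat[OF gamma_pos ss_pos nonsing u_dim v_dim _ right_sv left_sv])
  show ?thesis using columns_full_rank[OF gram] ..
qed

end
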